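(* Let $\alpha\in(0,1)$ and $\eta>0$, and run the generalized share algorithm with the projection mixing rule $\hat p_{t+1}\in\arg\min_{x\in\Delta_d^\alpha}\mathcal K(x,v_{t+1})$. Then for all $T\ge1$, all loss vectors $\ell_1,\dots,\ell_T\in[0,1]^d$, and all $u_1,\dots,u_T\in\mathbb R_+^d$, \[ \sum_{t=1}^T\|u_t\|_1\,\hat p_t^\top\ell_t-\sum_{t=1}^T u_t^\top\ell_t\le \frac{\|u_1\|_1\ln d}{\eta}+\frac{m(u_1^T)}{\eta}\ln\frac{d}{\alpha}+\Big(\frac{\eta}{8}+\alpha\Big)\sum_{t=1}^T\|u_t\|_1 . \]
   Context: Let $d\ge1$ and $\Delta_d=\{q\in[0,1]^d:\sum_{i=1}^d q_i=1\}$. The generalized share algorithm with learning rate $\eta>0$ and mixing functions $\psi_t:[0,1]^{td}\to\Delta_d$ ($t\ge2$) works as follows: $\hat p_1=v_1=(1/d,\dots,1/d)$. At each round $t=1,2,\dots$ it predicts $\hat p_t=(\hat p_{1,t},\dots,\hat p_{d,t})\in\Delta_d$, observes a loss vector $\ell_t=(\ell_{1,t},\dots,\ell_{d,t})\in[0,1]^d$ (arbitrary), and suffers loss $\hat p_t^\top\ell_t$. It then forms the pre-weights $v_{j,t+1}=\hat p_{j,t}e^{-\eta\ell_{j,t}}/\sum_{i=1}^d\hat p_{i,t}e^{-\eta\ell_{i,t}}$ for $j=1,\dots,d$, sets $v_{t+1}=(v_{1,t+1},\dots,v_{d,t+1})$, and defines $\hat p_{t+1}=\psi_{t+1}(V_{t+1})$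 where $V_{t+1}=[v_{i,s}]_{1\le i\le d,1\le s\le t+1}$ is the $d\times(t+1)$ matrix of all pre-weights so far. Here $\Delta_d^\alpha=[\alpha/d,1]^d\cap\Delta_d$ and $\mathcal K(x,v)=\sum_{i=1}^d x_i\ln(x_i/v_i)$ is the Kullback–Leibler divergence. For $x,y\in\mathbb R_+^d$, $D_{\mathrm{TV}}(x,y)=\sum_{i:\,x_i\ge y_i}(x_i-y_i)$, and for $u_1,\dots,u_T\in\mathbb R_+^d$, $m(u_1^T)=\sum_{t=2}^T D_{\mathrm{TV}}(u_t,u_{t-1})$. *)

theory Defs
  imports Complex_Main
begin

text \<open>Vectors in R^d are represented as functions nat => real; only indices i < d matter.\<close>

definition simplex :: "nat \<Rightarrow> (nat \<Rightarrow> real) set" where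
  "simplex d = {x. (\<forall>i<d. 0 \<le> x i \<and> x i \<le> 1) \<and> (\<Sum>i<d. x i) = 1}"

definition simplex_alpha :: "real \<Rightarrow> nat \<Rightarrow> (nat \<Rightarrow> real) set" where
  "simplex_alpha \<alpha> d = {x \<in> simplex d. \<forall>i<d. \<alpha> / real d \<le> x i}"

definition KL :: "nat \<Rightarrow> (nat \<Rightarrow> real) \<Rightarrow> (nat \<Rightarrow> real) \<Rightarrow> real" where
  "KL d x v = (\<Sum>i<d. if x i = 0 then 0 else x i * ln (x i / v i))"

text \<open>Pre-weights v_{t+1} from prediction p_t and loss l_t.\<close>
definition share_update :: "real \<Rightarrow> nat \<Rightarrow> (nat \<Rightarrow> real) \<Rightarrow> (nat \<Rightarrow> real) \<Rightarrow> (nat \<Rightarrow> real)" where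
  "share_update \<eta> d p l = (\<lambda>j. p j * exp (- \<eta> * l j) / (\<Sum>i<d. p i * exp (- \<eta> * l i)))"

definition norm1 :: "nat \<Rightarrow> (nat \<Rightarrow> real) \<Rightarrow> real" where
  "norm1 d u = (\<Sum>i<d. \<bar>u i\<bar>)"

definition inner_d :: "nat \<Rightarrow> (nat \<Rightarrow> real) \<Rightarrow> (nat \<Rightarrow> real) \<Rightarrow> real" where
  "inner_d d x y = (\<Sum>i<d. x i * y i)"

definition D_TV :: "nat \<Rightarrow> (nat \<Rightarrow> real) \<Rightarrow> (nat \<Rightarrow> real) \<Rightarrow> real" where
  "D_TV d x y = (\<Sum>i\<in>{i. i < d \<and> y i \<le> x i}. x i - y i)"

definition path_m :: "nat \<Rightarrow> (nat \<Rightarrow> nat \<Rightarrow> real) \<Rightarrow> nat \<Rightarrow> real" where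
  "path_m d u T = (\<Sum>t=2..T. D_TV d (u t) (u (t - 1)))"

end

theory Submission
  imports Defs "HOL-Probability.Hoeffding"
begin

(* The comparator u_t is replaced by its mixture ua_t = (1-alpha) u_t + alpha |u_t|_1 / d
   with the uniform vector, and the analysis tracks the "log scores" sum_i ua_t(i) ln w(i)
   of ua_t against the prediction p_t, the pre-weight v_{t+1} and the next prediction p_{t+1}.
   Three one-round facts drive the proof:
   (1) exponential-weights step: by Hoeffding's lemma, the gain in log score from p_t to
       v_{t+1} pays for the regret of round t up to |u_t|_1 (eta/8 + alpha);
   (2) projection step: p_{t+1} is the KL projection of v_{t+1} onto the convex set
       Delta_d^alpha, and ua_t / |u_t|_1 lies in that set, so by the generalized Pythagorean
       inequality the log score can only increase from v_{t+1} to p_{t+1};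
   (3) comparator-shift step: since ln(1/p_t(i)) lies in [0, ln(d/alpha)], switching the
       comparator from ua_{t-1} to ua_t costs at most D_TV(u_t,u_{t-1}) ln(d/alpha). *)


lemma exp_neg_below_chord:
  fixes \<eta> x :: real
  assumes "0 \<le> x" "x \<le> 1"
  shows "exp (-\<eta> * x) \<le> (1 - x) + x * exp (-\<eta>)"
proof -
  have "exp ((1 - x) *\<^sub>R 0 + x *\<^sub>R (-\<eta>)) \<le> (1 - x) * exp 0 + x * exp (-\<eta>)"
    by (rule convex_onD[OF exp_convex]) (use assms in auto)
  then show ?thesis by (simp add: mult.commute)
qed

lemma log_normalizer_hoeffding:
  fixes p l :: "nat \<Rightarrow> real"
  assumes p: "p \<in> Defs.simplex d" and l: "\<forall>i<d. 0 \<le> l i \<and> l i \<le> 1" and \<eta>: "\<eta> > 0"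
  shows "ln (\<Sum>i<d. p i * exp (-\<eta> * l i)) \<le> -\<eta> * inner_d d p l + \<eta>^2 / 8"
proof -
  define m where "m = inner_d d p l"
  define Z where "Z = (\<Sum>i<d. p i * exp (-\<eta> * l i))"
  have p0: "\<forall>i<d. 0 \<le> p i" and p1: "(\<Sum>i<d. p i) = 1" using p by (auto simp: Defs.simplex_def)
  have "m \<le> (\<Sum>i<d. p i)"
    unfolding m_def inner_d_def using p0 l by (intro sum_mono) (auto intro: mult_left_le)
  hence m1: "m \<le> 1" using p1 by simp
  have "Z \<le> (\<Sum>i<d. p i * ((1 - l i) + l i * exp (-\<eta>)))"
    unfolding Z_def using p0 l by (intro sum_mono mult_left_mono exp_neg_below_chord) auto
  also have "\<dots> = (\<Sum>i<d. p i) - m + m * exp (-\<eta>)"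
    by (simp add: m_def inner_d_def algebra_simps sum.distrib sum_subtractf sum_distrib_left)
  also have "\<dots> = exp (-\<eta>) * (1 + (1 - m) * (exp \<eta> - 1))"
    using p1 by (simp add: algebra_simps exp_minus field_simps)
  finally have Z_le: "Z \<le> exp (-\<eta>) * (1 + (1 - m) * (exp \<eta> - 1))" .
  have "exp (-\<eta>) = (\<Sum>i<d. p i * exp (-\<eta>))" using p1 by (simp add: sum_distrib_right[symmetric])
  also have "\<dots> \<le> Z" unfolding Z_def using p0 l \<eta> by (intro sum_mono mult_left_mono) auto
  finally have Z_pos: "0 < Z" using exp_gt_zero less_le_trans by blast
  have mix_pos: "0 < 1 + (1 - m) * (exp \<eta> - 1)" using m1 \<eta> by (intro add_pos_nonneg) auto
  have "ln Z \<le> ln (exp (-\<eta>) * (1 + (1 - m) * (exp \<eta> - 1)))" using Z_le Z_pos by simp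
  also have "\<dots> = -\<eta> + ln (1 + (1 - m) * (exp \<eta> - 1))"
    using mix_pos by (simp add: ln_mult)
  also have "\<dots> \<le> -\<eta> + (\<eta> * (1 - m) + \<eta>^2 / 8)"
    using Hoeffdings_lemma_aux[of \<eta> "1 - m"] \<eta> m1 by simp
  finally show ?thesis by (simp add: Z_def m_def algebra_simps)
qed


context
  fixes \<eta> :: real and d :: nat and p l :: "nat \<Rightarrow> real"
  assumes p_pos: "\<forall>i<d. 0 < p i" and p_sum: "(\<Sum>i<d. p i) = 1"
begin

private definition normalizer :: real where
  "normalizer = (\<Sum>i<d. p i * exp (- \<eta> * l i))"

private lemma normalizer_pos: "0 < normalizer"
proof -
  have "d \<noteq> 0" using p_sum by (cases "d = 0") auto
  then show ?thesis unfolding normalizer_def using p_pos by (intro sum_pos) auto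
qed

private lemma share_update_eq: "share_update \<eta> d p l i = p i * exp (- \<eta> * l i) / normalizer"
  by (simp add: share_update_def normalizer_def)

lemma share_update_pos: "i < d \<Longrightarrow> 0 < share_update \<eta> d p l i"
  using p_pos normalizer_pos by (simp add: share_update_eq)

lemma share_update_sum: "(\<Sum>i<d. share_update \<eta> d p l i) = 1"
  using normalizer_pos unfolding normalizer_def
  by (simp add: share_update_def sum_divide_distrib[symmetric])

lemma share_update_le_one: "i < d \<Longrightarrow> share_update \<eta> d p l i \<le> 1"
  using member_le_sum[of i "{..<d}" "share_update \<eta> d p l"] share_update_pos share_update_sum
  by (auto intro: less_imp_le)

lemma ln_share_update:
  "i < d \<Longrightarrow> ln (share_update \<eta> d p l i) = ln (p i) - \<eta> * l i - ln (\<Sum>j<d. p j * exp (- \<eta> * l j))"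
  using p_pos normalizer_pos by (auto simp: share_update_eq ln_div ln_mult normalizer_def)

end


section \<open>Mixing the comparator with the uniform vector\<close>

text \<open>The comparator u is replaced by (1-alpha) u + alpha |u|_1 / d; its normalization lies in
  the restricted simplex, which is what makes the projection step applicable.\<close>
definition mix_uniform :: "real \<Rightarrow> nat \<Rightarrow> (nat \<Rightarrow> real) \<Rightarrow> nat \<Rightarrow> real" where
  "mix_uniform \<alpha> d u = (\<lambda>i. (1 - \<alpha>) * u i + \<alpha> * (\<Sum>j<d. u j) / real d)"

definition log_score :: "nat \<Rightarrow> (nat \<Rightarrow> real) \<Rightarrow> (nat \<Rightarrow> real) \<Rightarrow> real" where
  "log_score d x w = (\<Sum>i<d. x i * ln (w i))"

lemma mix_uniform_sum:
  assumes "d \<ge> 1"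
  shows "(\<Sum>i<d. mix_uniform \<alpha> d u i) = (\<Sum>i<d. u i)"
proof -
  have "(\<Sum>i<d. mix_uniform \<alpha> d u i) = (1 - \<alpha>) * (\<Sum>i<d. u i) + real d * (\<alpha> * (\<Sum>i<d. u i) / real d)"
    by (simp add: mix_uniform_def sum.distrib sum_distrib_left[symmetric])
  then show ?thesis using assms by (simp add: algebra_simps)
qed

lemma mix_uniform_nonneg:
  assumes "0 \<le> \<alpha>" "\<alpha> \<le> 1" "\<forall>i<d. 0 \<le> u i" "i < d"
  shows "0 \<le> mix_uniform \<alpha> d u i"
proof -
  have "0 \<le> (\<Sum>j<d. u j)" using assms(3) by (intro sum_nonneg) auto
  then show ?thesis using assms unfolding mix_uniform_def by auto
qed

lemma mix_uniform_normalized_in_simplex_alpha: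
  assumes d: "d \<ge> 1" and \<alpha>: "0 < \<alpha>" "\<alpha> \<le> 1"
    and u: "\<forall>i<d. 0 \<le> u i" and N: "0 < (\<Sum>j<d. u j)"
  shows "(\<lambda>i. mix_uniform \<alpha> d u i / (\<Sum>j<d. u j)) \<in> simplex_alpha \<alpha> d"
proof -
  define x where "x = (\<lambda>i. mix_uniform \<alpha> d u i / (\<Sum>j<d. u j))"
  have ad: "0 < \<alpha> / real d" using d \<alpha> by simp
  have low: "\<alpha> / real d \<le> x i" if "i < d" for i
  proof -
    have "x i = (1 - \<alpha>) * u i / (\<Sum>j<d. u j) + \<alpha> / real d"
      using N by (simp add: x_def mix_uniform_def add_divide_distrib)
    moreover have "0 \<le> (1 - \<alpha>) * u i / (\<Sum>j<d. u j)" using u that \<alpha> N by auto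
    ultimately show ?thesis by simp
  qed
  have sum: "(\<Sum>i<d. x i) = 1"
    using N by (simp add: x_def sum_divide_distrib[symmetric] mix_uniform_sum[OF d])
  have "x i \<le> 1" if "i < d" for i
    using member_le_sum[of i "{..<d}" x] low ad sum that by (force intro: order_trans[of 0 "\<alpha> / real d"])
  then show ?thesis
    using low sum ad unfolding x_def[symmetric] simplex_alpha_def Defs.simplex_def
    by (auto intro: order_trans[of 0 "\<alpha> / real d"])
qed

lemma mix_uniform_loss:
  assumes d: "d \<ge> 1" and \<alpha>: "0 \<le> \<alpha>" "\<alpha> \<le> 1"
    and u: "\<forall>i<d. 0 \<le> u i" and l: "\<forall>i<d. 0 \<le> l i \<and> l i \<le> 1"
  shows "(\<Sum>i<d. mix_uniform \<alpha> d u i * l i) \<le> inner_d d u l + \<alpha> * (\<Sum>j<d. u j)"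
proof -
  define N where "N = (\<Sum>j<d. u j)"
  have N0: "0 \<le> N" unfolding N_def using u by (intro sum_nonneg) auto
  have L0: "0 \<le> inner_d d u l" unfolding inner_d_def using u l by (intro sum_nonneg) auto
  have l_sum: "(\<Sum>i<d. l i) \<le> real d"
    using sum_mono[of "{..<d}" l "\<lambda>_. 1"] l by auto
  have "(\<Sum>i<d. mix_uniform \<alpha> d u i * l i) = (\<Sum>i<d. (1 - \<alpha>) * (u i * l i) + \<alpha> * N / real d * l i)"
    by (intro sum.cong) (simp_all add: mix_uniform_def N_def algebra_simps)
  also have "\<dots> = (1 - \<alpha>) * inner_d d u l + \<alpha> * N / real d * (\<Sum>i<d. l i)"
    by (simp add: inner_d_def sum.distrib sum_distrib_left)
  also have "\<dots> \<le> (1 - \<alpha>) * inner_d d u l + \<alpha> * N / real d * real d"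
    using l_sum N0 \<alpha> by (intro add_left_mono mult_left_mono) auto
  also have "\<dots> \<le> inner_d d u l + \<alpha> * N" using d L0 \<alpha> by (simp add: algebra_simps)
  finally show ?thesis by (simp add: N_def)
qed


section \<open>Step (1): one round of exponential weights\<close>

lemma exp_weights_round_bound:
  assumes d: "d \<ge> 1" and \<alpha>: "0 \<le> \<alpha>" "\<alpha> \<le> 1" and \<eta>: "\<eta> > 0"
    and p: "p \<in> Defs.simplex d" "\<forall>i<d. 0 < p i"
    and l: "\<forall>i<d. 0 \<le> l i \<and> l i \<le> 1" and u: "\<forall>i<d. 0 \<le> u i"
  defines "ua \<equiv> mix_uniform \<alpha> d u" and "N \<equiv> (\<Sum>j<d. u j)"
  shows "N * inner_d d p l - inner_d d u l
           \<le> (log_score d ua (share_update \<eta> d p l) - log_score d ua p) / \<eta> + N * (\<eta> / 8 + \<alpha>)"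
proof -
  define Z where "Z = (\<Sum>i<d. p i * exp (- \<eta> * l i))"
  have p_sum: "(\<Sum>i<d. p i) = 1" using p by (simp add: Defs.simplex_def)
  have N0: "0 \<le> N" unfolding N_def using u by (intro sum_nonneg) auto
  have "log_score d ua (share_update \<eta> d p l) - log_score d ua p = (\<Sum>i<d. ua i * (- \<eta> * l i - ln Z))"
    unfolding log_score_def sum_subtractf[symmetric]
    by (intro sum.cong refl) (simp add: ln_share_update[OF p(2) p_sum] Z_def algebra_simps)
  also have "\<dots> = - \<eta> * (\<Sum>i<d. ua i * l i) - (\<Sum>i<d. ua i) * ln Z"
    by (simp add: right_diff_distrib sum_subtractf sum_distrib_left sum_distrib_right[symmetric]
        mult.assoc mult.left_commute)
  also have "\<dots> = - \<eta> * (\<Sum>i<d. ua i * l i) - N * ln Z"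
    by (simp add: ua_def N_def mix_uniform_sum[OF d])
  also have "\<dots> \<ge> - \<eta> * (inner_d d u l + \<alpha> * N) - N * (-\<eta> * inner_d d p l + \<eta>^2 / 8)"
    using mult_left_mono[OF log_normalizer_hoeffding[OF p(1) l \<eta>] N0]
      mult_left_mono[OF mix_uniform_loss[OF d \<alpha> u l] less_imp_le[OF \<eta>]]
    by (simp add: Z_def ua_def N_def)
  finally have "\<eta> * (N * inner_d d p l - inner_d d u l - N * (\<eta> / 8 + \<alpha>))
      \<le> log_score d ua (share_update \<eta> d p l) - log_score d ua p"
    by (simp add: algebra_simps power2_eq_square)
  then show ?thesis using \<eta> by (simp add: field_simps)
qed


section \<open>Step (2): the KL projection onto the restricted simplex\<close>

lemma simplex_alpha_lower:
  assumes "x \<in> simplex_alpha \<alpha> d" "i < d"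
  shows "\<alpha> / real d \<le> x i"
  using assms by (simp add: simplex_alpha_def)

lemma simplex_alpha_pos:
  assumes "d \<ge> 1" "0 < \<alpha>" "x \<in> simplex_alpha \<alpha> d" "i < d"
  shows "0 < x i"
  using simplex_alpha_lower[OF assms(3,4)] assms(1,2) by (auto intro: less_le_trans[rotated])

lemma simplex_alpha_sum: "x \<in> simplex_alpha \<alpha> d \<Longrightarrow> (\<Sum>i<d. x i) = 1"
  by (simp add: simplex_alpha_def Defs.simplex_def)

lemma simplex_alpha_convex:
  assumes x: "x \<in> simplex_alpha \<alpha> d" and q: "q \<in> simplex_alpha \<alpha> d" and e: "0 \<le> e" "e \<le> 1"
  shows "(\<lambda>i. (1 - e) * q i + e * x i) \<in> simplex_alpha \<alpha> d"
proof -
  have above: "a \<le> (1 - e) * q i + e * x i" if "a \<le> q i" "a \<le> x i" for a i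
  proof -
    have "a = (1 - e) * a + e * a" by (simp add: algebra_simps)
    also have "\<dots> \<le> (1 - e) * q i + e * x i" using that e by (intro add_mono mult_left_mono) auto
    finally show ?thesis .
  qed
  have below: "(1 - e) * q i + e * x i \<le> b" if "q i \<le> b" "x i \<le> b" for b i
  proof -
    have "(1 - e) * q i + e * x i \<le> (1 - e) * b + e * b" using that e by (intro add_mono mult_left_mono) auto
    then show ?thesis by (simp add: algebra_simps)
  qed
  have "(\<Sum>i<d. (1 - e) * q i + e * x i) = 1"
    using simplex_alpha_sum[OF x] simplex_alpha_sum[OF q]
    by (simp add: sum.distrib sum_distrib_left[symmetric])
  then show ?thesis
    using x q above below unfolding simplex_alpha_def Defs.simplex_def by auto
qed

lemma KL_pos_eq:
  assumes "\<forall>i<d. 0 < x i"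
  shows "KL d x v = (\<Sum>i<d. x i * ln (x i / v i))"
  unfolding KL_def using assms by (intro sum.cong) auto

text \<open>Second-order control of the increment of a ln(a/b) in a, used to differentiate KL.\<close>
lemma xlogx_increment_bound:
  fixes a h b :: real
  assumes "a > 0" "a + h > 0" "b > 0"
  shows "(a + h) * ln ((a + h) / b) - a * ln (a / b) \<le> h * (ln a - ln b) + h + h^2 / a"
proof -
  have "ln ((a + h) / a) \<le> (a + h) / a - 1" using assms by (intro ln_le_minus_one) auto
  hence "ln (a + h) - ln a \<le> h / a" using assms by (simp add: ln_div field_simps)
  hence "(a + h) * (ln (a + h) - ln a) \<le> (a + h) * (h / a)" using assms by (intro mult_left_mono) auto
  moreover have "(a + h) * (h / a) = h + h^2 / a" using assms by (simp add: field_simps power2_eq_square)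
  moreover have "(a + h) * ln ((a + h) / b) - a * ln (a / b) = (a + h) * (ln (a + h) - ln a) + h * (ln a - ln b)"
    using assms by (simp add: ln_div algebra_simps)
  ultimately show ?thesis by linarith
qed

lemma nonneg_of_small_perturbations:
  fixes D C :: real
  assumes C: "C \<ge> 0" and pert: "\<And>e. 0 < e \<Longrightarrow> e \<le> 1 \<Longrightarrow> 0 \<le> D + e * C"
  shows "D \<ge> 0"
proof (rule ccontr)
  assume "\<not> D \<ge> 0"
  define e where "e = min 1 (- D / (2 * (C + 1)))"
  have e: "0 < e" "e \<le> 1" using \<open>\<not> D \<ge> 0\<close> C by (auto simp: e_def divide_neg_pos)
  have "e * C \<le> (- D / (2 * (C + 1))) * C" using C by (intro mult_right_mono) (auto simp: e_def)
  also have "\<dots> = (- D / 2) * (C / (C + 1))" using C by (simp add: field_simps)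
  also have "\<dots> \<le> (- D / 2) * 1" using \<open>\<not> D \<ge> 0\<close> C by (intro mult_left_mono) auto
  finally show False using pert[OF e] \<open>\<not> D \<ge> 0\<close> by linarith
qed

lemma KL_projection_first_order:
  assumes d: "d \<ge> 1" and \<alpha>: "\<alpha> > 0" and v: "\<forall>i<d. 0 < v i"
    and q: "is_arg_min (\<lambda>x. KL d x v) (\<lambda>x. x \<in> simplex_alpha \<alpha> d) q"
    and x: "x \<in> simplex_alpha \<alpha> d"
  shows "0 \<le> (\<Sum>i<d. (x i - q i) * (ln (q i) - ln (v i)))"
proof -
  have qa: "q \<in> simplex_alpha \<alpha> d" and q_min: "\<And>y. y \<in> simplex_alpha \<alpha> d \<Longrightarrow> KL d q v \<le> KL d y v"
    using q by (auto simp: is_arg_min_def not_less)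
  have q_pos: "\<forall>i<d. 0 < q i" using simplex_alpha_pos[OF d \<alpha> qa] by blast
  define w where "w i = x i - q i" for i
  have w_sum: "(\<Sum>i<d. w i) = 0"
    using simplex_alpha_sum[OF x] simplex_alpha_sum[OF qa] by (simp add: w_def sum_subtractf)
  define C where "C = (\<Sum>i<d. (w i)^2 / q i)"
  have "C \<ge> 0" unfolding C_def using q_pos by (intro sum_nonneg) auto
  moreover have "0 \<le> (\<Sum>i<d. w i * (ln (q i) - ln (v i))) + e * C" if e: "0 < e" "e \<le> 1" for e
  proof -
    define y where "y i = q i + e * w i" for i
    have "y = (\<lambda>i. (1 - e) * q i + e * x i)" by (simp add: fun_eq_iff y_def w_def algebra_simps)
    then have ya: "y \<in> simplex_alpha \<alpha> d" using simplex_alpha_convex[OF x qa, of e] e by simp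
    have y_pos: "\<forall>i<d. 0 < y i" using simplex_alpha_pos[OF d \<alpha> ya] by blast
    have "0 \<le> KL d y v - KL d q v" using q_min[OF ya] by simp
    also have "\<dots> = (\<Sum>i<d. (q i + e * w i) * ln ((q i + e * w i) / v i) - q i * ln (q i / v i))"
      by (simp add: KL_pos_eq[OF y_pos] KL_pos_eq[OF q_pos] y_def sum_subtractf)
    also have "\<dots> \<le> (\<Sum>i<d. (e * w i) * (ln (q i) - ln (v i)) + e * w i + (e * w i)^2 / q i)"
      using q_pos v y_pos by (intro sum_mono xlogx_increment_bound) (auto simp: y_def)
    also have "\<dots> = (\<Sum>i<d. e * (w i * (ln (q i) - ln (v i))) + e * w i + e^2 * ((w i)^2 / q i))"
      by (simp add: power_mult_distrib mult.assoc)
    also have "\<dots> = e * (\<Sum>i<d. w i * (ln (q i) - ln (v i))) + e * (\<Sum>i<d. w i) + e^2 * C"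
      by (simp add: C_def sum.distrib sum_distrib_left)
    also have "\<dots> = e * ((\<Sum>i<d. w i * (ln (q i) - ln (v i))) + e * C)"
      using w_sum by (simp add: algebra_simps power2_eq_square)
    finally show ?thesis using e by (simp add: zero_le_mult_iff)
  qed
  ultimately have "0 \<le> (\<Sum>i<d. w i * (ln (q i) - ln (v i)))" by (rule nonneg_of_small_perturbations)
  then show ?thesis by (simp add: w_def)
qed

lemma gibbs_inequality:
  fixes q v :: "nat \<Rightarrow> real"
  assumes q: "\<forall>i<d. 0 < q i" and v: "\<forall>i<d. 0 < v i" and sums: "(\<Sum>i<d. q i) = (\<Sum>i<d. v i)"
  shows "0 \<le> (\<Sum>i<d. q i * (ln (q i) - ln (v i)))"
proof -
  have "q i - v i \<le> q i * (ln (q i) - ln (v i))" if "i < d" for i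
  proof -
    have qi: "q i > 0" and vi: "v i > 0" using q v that by auto
    have "q i * ln (v i / q i) \<le> q i * (v i / q i - 1)"
      using qi vi by (intro mult_left_mono ln_le_minus_one) auto
    then show ?thesis using qi vi by (simp add: ln_div algebra_simps)
  qed
  then have "(\<Sum>i<d. q i - v i) \<le> (\<Sum>i<d. q i * (ln (q i) - ln (v i)))" by (intro sum_mono) auto
  then show ?thesis using sums by (simp add: sum_subtractf)
qed

lemma KL_projection_log_score:
  assumes d: "d \<ge> 1" and \<alpha>: "\<alpha> > 0"
    and v: "\<forall>i<d. 0 < v i" "(\<Sum>i<d. v i) = 1"
    and q: "is_arg_min (\<lambda>x. KL d x v) (\<lambda>x. x \<in> simplex_alpha \<alpha> d) q"
    and x: "x \<in> simplex_alpha \<alpha> d"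
  shows "log_score d x v \<le> log_score d x q"
proof -
  have qa: "q \<in> simplex_alpha \<alpha> d" using q by (simp add: is_arg_min_def)
  have "0 \<le> (\<Sum>i<d. q i * (ln (q i) - ln (v i)))"
    using gibbs_inequality[OF _ v(1)] simplex_alpha_pos[OF d \<alpha> qa] simplex_alpha_sum[OF qa] v(2)
    by simp
  moreover have "log_score d x q - log_score d x v
      = (\<Sum>i<d. (x i - q i) * (ln (q i) - ln (v i))) + (\<Sum>i<d. q i * (ln (q i) - ln (v i)))"
    by (simp add: log_score_def sum_subtractf[symmetric] sum.distrib[symmetric] algebra_simps)
  ultimately show ?thesis using KL_projection_first_order[OF d \<alpha> v(1) q x] by linarith
qed

lemma projection_round_bound:
  assumes d: "d \<ge> 1" and \<alpha>: "0 < \<alpha>" "\<alpha> < 1"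
    and v: "\<forall>i<d. 0 < v i" "(\<Sum>i<d. v i) = 1"
    and q: "is_arg_min (\<lambda>x. KL d x v) (\<lambda>x. x \<in> simplex_alpha \<alpha> d) q"
    and u: "\<forall>i<d. 0 \<le> u i"
  shows "log_score d (mix_uniform \<alpha> d u) v \<le> log_score d (mix_uniform \<alpha> d u) q"
proof (cases "(\<Sum>j<d. u j) = 0")
  case True
  then have "\<forall>i<d. u i = 0" using u by (subst (asm) sum_nonneg_eq_0_iff) auto
  then show ?thesis using True by (simp add: log_score_def mix_uniform_def)
next
  case False
  define N where "N = (\<Sum>j<d. u j)"
  have N: "0 < N" using False u unfolding N_def by (metis sum_nonneg lessThan_iff order_less_le)
  have score_scale: "log_score d (mix_uniform \<alpha> d u) w
      = N * log_score d (\<lambda>i. mix_uniform \<alpha> d u i / N) w" for w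
    using N by (simp add: log_score_def sum_distrib_left)
  show ?thesis
    unfolding score_scale using N
    by (intro mult_left_mono KL_projection_log_score[OF d \<alpha>(1) v q]
        mix_uniform_normalized_in_simplex_alpha[OF d \<alpha>(1) less_imp_le[OF \<alpha>(2)] u, folded N_def]) auto
qed


section \<open>Step (3): shifting the comparator\<close>

lemma D_TV_eq_positive_part: "D_TV d x y = (\<Sum>i<d. max (x i - y i) 0)"
proof -
  have "{i. i < d \<and> y i \<le> x i} = {i \<in> {..<d}. y i \<le> x i}" by auto
  then have "D_TV d x y = (\<Sum>i\<in>{i \<in> {..<d}. y i \<le> x i}. x i - y i)" by (simp add: D_TV_def)
  also have "\<dots> = (\<Sum>i<d. if y i \<le> x i then x i - y i else 0)"
    using sum.inter_filter[of "{..<d}" "\<lambda>i. x i - y i" "\<lambda>i. y i \<le> x i"] by simp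
  also have "\<dots> = (\<Sum>i<d. max (x i - y i) 0)" by (intro sum.cong) auto
  finally show ?thesis .
qed

lemma D_TV_weighted_bound:
  assumes "\<forall>i<d. 0 \<le> c i \<and> c i \<le> M"
  shows "(\<Sum>i<d. (x i - y i) * c i) \<le> D_TV d x y * M"
proof -
  have "(x i - y i) * c i \<le> max (x i - y i) 0 * M" if "i < d" for i
    using assms that by (cases "x i - y i \<ge> 0") (auto intro: mult_mono mult_nonpos_nonneg order_trans)
  then have "(\<Sum>i<d. (x i - y i) * c i) \<le> (\<Sum>i<d. max (x i - y i) 0 * M)" by (intro sum_mono) auto
  then show ?thesis by (simp add: D_TV_eq_positive_part sum_distrib_right)
qed

lemma D_TV_mix_uniform:
  assumes d: "d \<ge> 1" and \<alpha>: "0 \<le> \<alpha>" "\<alpha> \<le> 1"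
  shows "D_TV d (mix_uniform \<alpha> d a) (mix_uniform \<alpha> d b) \<le> D_TV d a b"
proof -
  define s where "s = (\<Sum>j<d. a j) - (\<Sum>j<d. b j)"
  have s_le: "s \<le> D_TV d a b"
    unfolding s_def D_TV_eq_positive_part by (simp add: sum_subtractf[symmetric] sum_mono)
  have TV0: "0 \<le> D_TV d a b" unfolding D_TV_eq_positive_part by (intro sum_nonneg) auto
  have "D_TV d (mix_uniform \<alpha> d a) (mix_uniform \<alpha> d b)
      = (\<Sum>i<d. max ((1 - \<alpha>) * (a i - b i) + \<alpha> * (s / real d)) 0)"
    unfolding D_TV_eq_positive_part s_def mix_uniform_def
    by (intro sum.cong) (auto simp: algebra_simps diff_divide_distrib)
  also have "\<dots> \<le> (\<Sum>i<d. (1 - \<alpha>) * max (a i - b i) 0 + \<alpha> * (max s 0 / real d))"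
  proof (intro sum_mono)
    fix i
    have "(1 - \<alpha>) * (a i - b i) \<le> (1 - \<alpha>) * max (a i - b i) 0"
      using \<alpha> by (intro mult_left_mono) auto
    moreover have "\<alpha> * (s / real d) \<le> \<alpha> * (max s 0 / real d)"
      using \<alpha> by (intro mult_left_mono divide_right_mono) auto
    moreover have "0 \<le> (1 - \<alpha>) * max (a i - b i) 0" "0 \<le> \<alpha> * (max s 0 / real d)" using \<alpha> by auto
    ultimately show "max ((1 - \<alpha>) * (a i - b i) + \<alpha> * (s / real d)) 0
        \<le> (1 - \<alpha>) * max (a i - b i) 0 + \<alpha> * (max s 0 / real d)" by linarith
  qed
  also have "\<dots> = (1 - \<alpha>) * D_TV d a b + \<alpha> * max s 0"
    using d by (simp add: sum.distrib sum_distrib_left[symmetric] D_TV_eq_positive_part)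
  also have "\<dots> \<le> (1 - \<alpha>) * D_TV d a b + \<alpha> * D_TV d a b"
    using s_le TV0 \<alpha> by (intro add_left_mono mult_left_mono) auto
  finally show ?thesis by (simp add: algebra_simps)
qed

text \<open>Step (3): against a prediction in the restricted simplex, the log scores of two mixed
  comparators differ by at most D_TV ln(d/alpha), as 0 \<le> -ln p(i) \<le> ln(d/alpha).\<close>
lemma comparator_shift_bound:
  assumes d: "d \<ge> 1" and \<alpha>: "0 < \<alpha>" "\<alpha> < 1" and p: "p \<in> simplex_alpha \<alpha> d"
  shows "log_score d (mix_uniform \<alpha> d b) p - log_score d (mix_uniform \<alpha> d a) p
           \<le> D_TV d a b * ln (real d / \<alpha>)"
proof -
  have "0 \<le> - ln (p i) \<and> - ln (p i) \<le> ln (real d / \<alpha>)" if "i < d" for i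
  proof -
    have p_pos: "0 < p i" using simplex_alpha_pos[OF d \<alpha>(1) p that] .
    have "p i \<le> 1" using p that by (simp add: simplex_alpha_def Defs.simplex_def)
    moreover have "ln (\<alpha> / real d) \<le> ln (p i)"
      using simplex_alpha_lower[OF p that] p_pos d \<alpha> by simp
    ultimately show ?thesis using p_pos d \<alpha> by (simp add: ln_div)
  qed
  then have "(\<Sum>i<d. (mix_uniform \<alpha> d a i - mix_uniform \<alpha> d b i) * - ln (p i))
      \<le> D_TV d (mix_uniform \<alpha> d a) (mix_uniform \<alpha> d b) * ln (real d / \<alpha>)"
    by (intro D_TV_weighted_bound) auto
  also have "\<dots> \<le> D_TV d a b * ln (real d / \<alpha>)"
    using D_TV_mix_uniform[OF d] \<alpha> d by (intro mult_right_mono) auto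
  finally show ?thesis by (simp add: log_score_def sum_subtractf[symmetric] algebra_simps)
qed


section \<open>Telescoping and the regret bound\<close>

lemma telescoping_bound:
  fixes A B C :: "nat \<Rightarrow> real"
  assumes T: "T \<ge> 1" and BC: "\<And>t. 1 \<le> t \<Longrightarrow> t < T \<Longrightarrow> B t \<le> C t" and BT: "B T \<le> 0"
  shows "(\<Sum>t=1..T. B t - A t) \<le> - A 1 + (\<Sum>t=2..T. C (t - 1) - A t)"
proof -
  obtain T' where T': "T = Suc T'" using T by (cases T) auto
  have "(\<Sum>t=1..T. B t) = (\<Sum>t=1..T'. B t) + B T" using T' by simp
  also have "\<dots> \<le> (\<Sum>t=1..T'. C t) + 0" using BT BC T' by (intro add_mono sum_mono) auto
  also have "\<dots> = (\<Sum>t=2..T. C (t - 1))"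
    using T' sum.shift_bounds_cl_Suc_ivl[of "\<lambda>t. C (t - 1)" 1 T'] by (simp add: numeral_2_eq_2)
  finally have "(\<Sum>t=1..T. B t) \<le> (\<Sum>t=2..T. C (t - 1))" .
  moreover have "(\<Sum>t=1..T. A t) = A 1 + (\<Sum>t=2..T. A t)"
    using T sum.atLeast_Suc_atMost[of 1 T A] by (simp add: numeral_2_eq_2)
  ultimately show ?thesis by (simp add: sum_subtractf)
qed

lemma sum_round_bounds:
  fixes X \<Delta> N :: "nat \<Rightarrow> real"
  assumes \<eta>: "\<eta> > 0" and round: "\<And>t. t \<in> {1..T} \<Longrightarrow> X t \<le> \<Delta> t / \<eta> + N t * c"
    and total: "(\<Sum>t=1..T. \<Delta> t) \<le> K"
  shows "(\<Sum>t=1..T. X t) \<le> K / \<eta> + c * (\<Sum>t=1..T. N t)"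
proof -
  have "(\<Sum>t=1..T. X t) \<le> (\<Sum>t=1..T. \<Delta> t / \<eta> + N t * c)" using round by (intro sum_mono) auto
  also have "\<dots> = (\<Sum>t=1..T. \<Delta> t) / \<eta> + c * (\<Sum>t=1..T. N t)"
    by (simp add: sum.distrib sum_divide_distrib[symmetric] sum_distrib_left mult.commute)
  also have "\<dots> \<le> K / \<eta> + c * (\<Sum>t=1..T. N t)" using total \<eta> by (simp add: divide_right_mono)
  finally show ?thesis .
qed

text \<open>Log scores against a vector with entries in (0, 1] are nonpositive; this bounds the
  score of the last round, which is not carried over.\<close>
lemma log_score_nonpos:
  assumes "\<forall>i<d. 0 \<le> x i" "\<forall>i<d. 0 < w i \<and> w i \<le> 1"
  shows "log_score d x w \<le> 0"
  unfolding log_score_def using assms by (intro sum_nonpos) (auto intro: mult_nonneg_nonpos)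

lemma log_score_uniform:
  assumes "d \<ge> 1" "\<forall>i<d. w i = 1 / real d"
  shows "log_score d x w = - (\<Sum>i<d. x i) * ln (real d)"
proof -
  have "ln (1 / real d) = - ln (real d)" using assms(1) by (simp add: ln_div)
  then show ?thesis using assms(2) by (simp add: log_score_def sum_distrib_right sum_negf)
qed

lemma predictions_in_simplex_alpha:
  assumes d: "d \<ge> 1" and \<alpha>: "\<alpha> \<le> 1" and init: "\<And>i. i < d \<Longrightarrow> p 1 i = 1 / real d"
    and proj: "\<And>t. 1 \<le> t \<Longrightarrow> t < T \<Longrightarrow> is_arg_min (f t) (\<lambda>x. x \<in> simplex_alpha \<alpha> d) (p (Suc t))"
    and t: "t \<in> {1..T}"
  shows "p t \<in> simplex_alpha \<alpha> d"
proof (cases "t = 1")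
  case True
  then show ?thesis using d \<alpha> init by (auto simp: simplex_alpha_def Defs.simplex_def divide_right_mono)
next
  case False
  then obtain s where "t = Suc s" "1 \<le> s" "s < T" using t by (cases t) auto
  then show ?thesis using proj[of s] by (simp add: is_arg_min_def)
qed

theorem theorem1:
  fixes d T :: nat and \<alpha> \<eta> :: real
    and p l u :: "nat \<Rightarrow> nat \<Rightarrow> real"
  assumes "d \<ge> 1"
    and "0 < \<alpha>" and "\<alpha> < 1"
    and "\<eta> > 0"
    and "T \<ge> 1"
    and "\<And>t i. t \<in> {1..T} \<Longrightarrow> i < d \<Longrightarrow> 0 \<le> l t i \<and> l t i \<le> 1"
    and "\<And>t i. t \<in> {1..T} \<Longrightarrow> i < d \<Longrightarrow> 0 \<le> u t i"
    and "\<And>i. i < d \<Longrightarrow> p 1 i = 1 / real d"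
    and "\<And>t. 1 \<le> t \<Longrightarrow> t < T \<Longrightarrow>
           is_arg_min (\<lambda>x. KL d x (share_update \<eta> d (p t) (l t)))
                      (\<lambda>x. x \<in> simplex_alpha \<alpha> d) (p (Suc t))"
  shows "(\<Sum>t=1..T. norm1 d (u t) * inner_d d (p t) (l t)) - (\<Sum>t=1..T. inner_d d (u t) (l t))
         \<le> norm1 d (u 1) * ln (real d) / \<eta>
           + path_m d u T / \<eta> * ln (real d / \<alpha>)
           + (\<eta> / 8 + \<alpha>) * (\<Sum>t=1..T. norm1 d (u t))"
proof -
  note d = assms(1) and \<alpha> = assms(2,3) and \<eta> = assms(4) and T = assms(5)
    and loss = assms(6) and comp = assms(7) and proj = assms(9)
  define v where "v t = share_update \<eta> d (p t) (l t)" for t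
  define ua where "ua t = mix_uniform \<alpha> d (u t)" for t
  \<comment> \<open>log scores of the mixed comparator against p_t, v_{t+1} and p_{t+1}\<close>
  define A where "A t = log_score d (ua t) (p t)" for t
  define B where "B t = log_score d (ua t) (v t)" for t
  define C where "C t = log_score d (ua t) (p (Suc t))" for t
  have p_alpha: "p t \<in> simplex_alpha \<alpha> d" if "t \<in> {1..T}" for t
    by (rule predictions_in_simplex_alpha[OF d less_imp_le[OF \<alpha>(2)] assms(8) proj that])
  have p_pos: "\<forall>i<d. 0 < p t i" and p_sum: "(\<Sum>i<d. p t i) = 1" if "t \<in> {1..T}" for t
    using simplex_alpha_pos[OF d \<alpha>(1) p_alpha[OF that]] simplex_alpha_sum[OF p_alpha[OF that]] by auto
  have norm1_eq: "norm1 d (u t) = (\<Sum>i<d. u t i)" if "t \<in> {1..T}" for t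
    unfolding norm1_def using comp[OF that] by (intro sum.cong) auto
  have rounds: "norm1 d (u t) * inner_d d (p t) (l t) - inner_d d (u t) (l t)
      \<le> (B t - A t) / \<eta> + norm1 d (u t) * (\<eta> / 8 + \<alpha>)" if t: "t \<in> {1..T}" for t
    using exp_weights_round_bound[OF d _ _ \<eta> _ p_pos[OF t], of \<alpha> "l t" "u t"] p_alpha[OF t] \<alpha> loss[OF t]
      comp[OF t] norm1_eq[OF t] by (simp add: A_def B_def ua_def v_def simplex_alpha_def)
  have "B t \<le> C t" if "1 \<le> t" "t < T" for t
    using projection_round_bound[OF d \<alpha> _ _ proj[OF that]] share_update_pos share_update_sum
      p_pos p_sum comp that by (simp add: B_def C_def ua_def v_def)
  moreover have "B T \<le> 0"
    using log_score_nonpos mix_uniform_nonneg share_update_pos share_update_le_one p_pos p_sum comp T \<alpha>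
    by (simp add: B_def ua_def v_def)
  ultimately have "(\<Sum>t=1..T. B t - A t) \<le> - A 1 + (\<Sum>t=2..T. C (t - 1) - A t)"
    by (rule telescoping_bound[OF T])
  also have "\<dots> \<le> norm1 d (u 1) * ln (real d) + (\<Sum>t=2..T. D_TV d (u t) (u (t - 1)) * ln (real d / \<alpha>))"
    using log_score_uniform[OF d] assms(8) mix_uniform_sum[OF d] norm1_eq[of 1] T
      comparator_shift_bound[OF d \<alpha> p_alpha]
    by (intro add_mono sum_mono) (auto simp: A_def C_def ua_def)
  also have "\<dots> = norm1 d (u 1) * ln (real d) + path_m d u T * ln (real d / \<alpha>)"
    by (simp add: path_m_def sum_distrib_right)
  finally have total: "(\<Sum>t=1..T. B t - A t)
      \<le> norm1 d (u 1) * ln (real d) + path_m d u T * ln (real d / \<alpha>)" .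
  from sum_round_bounds[OF \<eta> rounds total] show ?thesis by (simp add: sum_subtractf add_divide_distrib)
qed

end
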